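(* Let $S$ be a scheme on $X$, $\mathbb F$ a field, $x\in X$, $E_a^*=E_a^*(x)$. Let $a\ge 0$ be an integer and $R_{i_b},R_{j_b},R_{\ell_b}\in S$ for $b=0,\dots,a$. Suppose $p_{i_bj_b}^{\ell_b}=1$ and $k_{i_b}=k_{\ell_b}=2$ for all $b\in\{0,\dots,a\}$, and $\ell_c=i_{c+1}$ for all $c\in\{0,\dots,a-1\}$. Write $xR_{i_0}=\{u_1,u_2\}$ and $xR_{\ell_a}=\{v_1,v_2\}$. Then the product $E_{i_0}^*A_{j_0}E_{\ell_0}^*E_{i_1}^*A_{j_1}E_{\ell_1}^*\cdots E_{i_a}^*A_{j_a}E_{\ell_a}^*$ equals either $E_{u_1v_1}+E_{u_2v_2}$ or $E_{u_1v_2}+E_{u_2v_1}$.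
   Context: Let $X$ be a nonempty finite set. A scheme of class $d$ on $X$ is a partition $S=\{R_0,\dots,R_d\}$ of $X\times X$ into nonempty sets such that $R_0=\{(b,b):b\in X\}$; for each $c$ there is $c'$ with $R_{c'}=\{(f,e):(e,f)\in R_c\}$; and for all $i,j,k$ the intersection number $p_{ij}^k=|\{\ell\in X:(m,\ell)\in R_i,(\ell,n)\in R_j\}|$ does not depend on $(m,n)\in R_k$. The valency is $k_a=p_{aa'}^0$. For $y\in X$, $yR_a=\{z:(y,z)\in R_a\}$. $A_a\in M_X(\mathbb F)$ is the $(0,1)$ adjacency matrix of $R_a$, $E_a^*(y)$ is the diagonal $(0,1)$-matrix with ones exactly at positions indexed by $yR_a$, and $E_{uv}$ is the matrix unit with a single $1$ at position $(u,v)$. *)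

theory Defs
  imports Main
begin

definition scheme :: "'x set \<Rightarrow> nat \<Rightarrow> (nat \<Rightarrow> ('x \<times> 'x) set) \<Rightarrow> bool" where
  "scheme X d R \<longleftrightarrow>
     finite X \<and> X \<noteq> {} \<and>
     (\<forall>c\<le>d. R c \<noteq> {} \<and> R c \<subseteq> X \<times> X) \<and>
     (\<forall>c\<le>d. \<forall>c'\<le>d. c \<noteq> c' \<longrightarrow> R c \<inter> R c' = {}) \<and>
     (\<Union>c\<in>{..d}. R c) = X \<times> X \<and>
     R 0 = Id_on X \<and>
     (\<forall>c\<le>d. \<exists>c'\<le>d. R c' = (R c)\<inverse>) \<and>
     (\<forall>i\<le>d. \<forall>j\<le>d. \<forall>k\<le>d. \<exists>p. \<forall>(m,n)\<in>R k.
        card {l\<in>X. (m,l) \<in> R i \<and> (l,n) \<in> R j} = p)"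

text \<open>Intersection number p_ij^k (evaluated at some pair of R k; well-defined for schemes).\<close>
definition int_num :: "'x set \<Rightarrow> (nat \<Rightarrow> ('x \<times> 'x) set) \<Rightarrow> nat \<Rightarrow> nat \<Rightarrow> nat \<Rightarrow> nat" where
  "int_num X R i j k = (let (m,n) = (SOME mn. mn \<in> R k) in
     card {l\<in>X. (m,l) \<in> R i \<and> (l,n) \<in> R j})"

definition conv_idx :: "nat \<Rightarrow> (nat \<Rightarrow> ('x \<times> 'x) set) \<Rightarrow> nat \<Rightarrow> nat" where
  "conv_idx d R c = (THE c'. c' \<le> d \<and> R c' = (R c)\<inverse>)"

definition valency :: "'x set \<Rightarrow> nat \<Rightarrow> (nat \<Rightarrow> ('x \<times> 'x) set) \<Rightarrow> nat \<Rightarrow> nat" where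
  "valency X d R a = int_num X R a (conv_idx d R a) 0"

text \<open>Matrices in M_X(F) are functions 'x => 'x => 'a (zero outside X x X).\<close>
definition mmul :: "'x set \<Rightarrow> ('x \<Rightarrow> 'x \<Rightarrow> 'a::field) \<Rightarrow> ('x \<Rightarrow> 'x \<Rightarrow> 'a) \<Rightarrow> ('x \<Rightarrow> 'x \<Rightarrow> 'a)" where
  "mmul X A B = (\<lambda>u v. \<Sum>w\<in>X. A u w * B w v)"

definition adj :: "(nat \<Rightarrow> ('x \<times> 'x) set) \<Rightarrow> nat \<Rightarrow> ('x \<Rightarrow> 'x \<Rightarrow> 'a::field)" where
  "adj R a = (\<lambda>u v. if (u,v) \<in> R a then 1 else 0)"

definition dual_idem :: "(nat \<Rightarrow> ('x \<times> 'x) set) \<Rightarrow> 'x \<Rightarrow> nat \<Rightarrow> ('x \<Rightarrow> 'x \<Rightarrow> 'a::field)" where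
  "dual_idem R y a = (\<lambda>u v. if u = v \<and> (y,u) \<in> R a then 1 else 0)"

definition munit :: "'x \<Rightarrow> 'x \<Rightarrow> ('x \<Rightarrow> 'x \<Rightarrow> 'a::field)" where
  "munit u v = (\<lambda>p q. if p = u \<and> q = v then 1 else 0)"

fun chain_prod :: "'x set \<Rightarrow> (nat \<Rightarrow> ('x \<times> 'x) set) \<Rightarrow> 'x \<Rightarrow> (nat \<Rightarrow> nat) \<Rightarrow> (nat \<Rightarrow> nat)
     \<Rightarrow> (nat \<Rightarrow> nat) \<Rightarrow> nat \<Rightarrow> ('x \<Rightarrow> 'x \<Rightarrow> 'a::field)" where
  "chain_prod X R x i j l 0 =
     mmul X (mmul X (dual_idem R x (i 0)) (adj R (j 0))) (dual_idem R x (l 0))"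
| "chain_prod X R x i j l (Suc b) =
     mmul X (chain_prod X R x i j l b)
       (mmul X (mmul X (dual_idem R x (i (Suc b))) (adj R (j (Suc b)))) (dual_idem R x (l (Suc b))))"

end

theory Submission
  imports Defs
begin

text \<open>
  Write \<open>xR\<^sub>c\<close> for the set of \<open>R c\<close>-neighbours of \<open>x\<close>. A single factor
  \<open>E\<^sup>*\<^sub>i A\<^sub>j E\<^sup>*\<^sub>l\<close> is the 0/1 matrix of \<open>R j\<close> restricted to \<open>xR\<^sub>i \<times> xR\<^sub>l\<close>.
  The condition \<open>p\<^sup>l\<^sub>i\<^sub>j = 1\<close> says that every column of it contains exactly one 1, and,
  with \<open>R j'\<close> the converse of \<open>R j\<close>, the intersection number \<open>p\<^sup>i\<^sub>l\<^sub>j\<^sub>'\<close> says that all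
  rows contain the same number of 1s.
  Since \<open>k\<^sub>i = k\<^sub>l\<close>, the rows then also contain exactly one 1, so the factor is the
  matrix of a bijection \<open>xR\<^sub>i \<rightarrow> xR\<^sub>l\<close>. Because \<open>l\<^sub>c = i\<^sub>c\<^sub>+\<^sub>1\<close>, these bijections
  compose, and the whole product is the matrix of a bijection between the two-element
  sets \<open>{u\<^sub>1, u\<^sub>2}\<close> and \<open>{v\<^sub>1, v\<^sub>2}\<close>, of which there are only two.
\<close>

abbreviation out_nbhd :: "(nat \<Rightarrow> ('x \<times> 'x) set) \<Rightarrow> 'x \<Rightarrow> nat \<Rightarrow> 'x set" where
  "out_nbhd R x c \<equiv> {y. (x, y) \<in> R c}"

definition graph_matrix :: "'x set \<Rightarrow> ('x \<Rightarrow> 'x) \<Rightarrow> ('x \<Rightarrow> 'x \<Rightarrow> 'a::field)" where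
  "graph_matrix A f = (\<lambda>p q. if p \<in> A \<and> q = f p then 1 else 0)"

lemma schemeD:
  assumes "scheme X d R"
  shows scheme_finite: "finite X"
    and scheme_rel_nonempty: "c \<le> d \<Longrightarrow> R c \<noteq> {}"
    and scheme_rel_subset: "c \<le> d \<Longrightarrow> R c \<subseteq> X \<times> X"
    and scheme_rel_disjoint: "c \<le> d \<Longrightarrow> c' \<le> d \<Longrightarrow> c \<noteq> c' \<Longrightarrow> R c \<inter> R c' = {}"
    and scheme_diagonal: "R 0 = Id_on X"
    and scheme_converse_ex: "c \<le> d \<Longrightarrow> \<exists>c'\<le>d. R c' = (R c)\<inverse>"
    and scheme_int_num_const: "i \<le> d \<Longrightarrow> j \<le> d \<Longrightarrow> k \<le> d \<Longrightarrow>
      \<exists>p. \<forall>(m, n)\<in>R k. card {z\<in>X. (m, z) \<in> R i \<and> (z, n) \<in> R j} = p"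
  using assms unfolding scheme_def by simp_all

lemma int_num_eq_card:
  assumes S: "scheme X d R" and "i \<le> d" "j \<le> d" "k \<le> d" and mn: "(m, n) \<in> R k"
  shows "card {z\<in>X. (m, z) \<in> R i \<and> (z, n) \<in> R j} = int_num X R i j k"
proof -
  obtain c where c: "\<forall>(m, n)\<in>R k. card {z\<in>X. (m, z) \<in> R i \<and> (z, n) \<in> R j} = c"
    using scheme_int_num_const[OF S assms(2-4)] by blast
  have "(SOME mn. mn \<in> R k) \<in> R k"
    using mn by (rule someI)
  then have "int_num X R i j k = c"
    using c by (auto simp: int_num_def split: prod.split)
  with c mn show ?thesis by auto
qed

lemma conv_idx_eq:
  assumes S: "scheme X d R" and c': "c' \<le> d" "R c' = (R c)\<inverse>"
  shows "conv_idx d R c = c'"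
  unfolding conv_idx_def
proof (rule the_equality)
  fix c'' assume c'': "c'' \<le> d \<and> R c'' = (R c)\<inverse>"
  show "c'' = c'"
  proof (rule ccontr)
    assume "c'' \<noteq> c'"
    then have "R c'' \<inter> R c' = {}"
      using scheme_rel_disjoint[OF S] c' c'' by blast
    with c' c'' scheme_rel_nonempty[OF S c'(1)] show False
      by auto
  qed
qed (use c' in blast)

lemma valency_eq_card:
  assumes S: "scheme X d R" and c: "c \<le> d" and y: "y \<in> X"
  shows "card (out_nbhd R y c) = valency X d R c"
proof -
  obtain c' where c': "c' \<le> d" "R c' = (R c)\<inverse>"
    using scheme_converse_ex[OF S c] by blast
  have "(y, y) \<in> R 0"
    using scheme_diagonal[OF S] y by auto
  then have "card {z\<in>X. (y, z) \<in> R c \<and> (z, y) \<in> R c'} = int_num X R c c' 0"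
    using int_num_eq_card[OF S c c'(1)] by simp
  moreover have "{z\<in>X. (y, z) \<in> R c \<and> (z, y) \<in> R c'} = out_nbhd R y c"
    using scheme_rel_subset[OF S c] c'(2) by auto
  ultimately show ?thesis
    by (simp add: valency_def conv_idx_eq[OF S c'])
qed

lemma int_num_eq_1_ex1:
  assumes S: "scheme X d R" and ijl: "i \<le> d" "j \<le> d" "l \<le> d"
    and one: "int_num X R i j l = 1" and xq: "(x, q) \<in> R l"
  shows "\<exists>!p. (x, p) \<in> R i \<and> (p, q) \<in> R j"
proof -
  have "card {z\<in>X. (x, z) \<in> R i \<and> (z, q) \<in> R j} = 1"
    using int_num_eq_card[OF S ijl xq] one by simp
  moreover have "{z\<in>X. (x, z) \<in> R i \<and> (z, q) \<in> R j} = {p. (x, p) \<in> R i \<and> (p, q) \<in> R j}"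
    using scheme_rel_subset[OF S ijl(1)] by auto
  ultimately obtain p0 where "{p. (x, p) \<in> R i \<and> (p, q) \<in> R j} = {p0}"
    by (auto simp: card_1_singleton_iff)
  then show ?thesis
    by (intro ex1I[of _ p0]) blast+
qed

lemma int_num_converse_eq_card:
  assumes S: "scheme X d R" and ijl: "i \<le> d" "j \<le> d" "l \<le> d"
    and j': "j' \<le> d" "R j' = (R j)\<inverse>" and xp: "(x, p) \<in> R i"
  shows "card {q. (x, q) \<in> R l \<and> (p, q) \<in> R j} = int_num X R l j' i"
proof -
  have "{q. (x, q) \<in> R l \<and> (p, q) \<in> R j} = {z\<in>X. (x, z) \<in> R l \<and> (z, p) \<in> R j'}"
    using scheme_rel_subset[OF S ijl(3)] j'(2) by auto
  then show ?thesis
    using int_num_eq_card[OF S ijl(3) j'(1) ijl(1) xp] by simp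
qed

lemma mmul_dual_idem_left:
  assumes "finite X"
  shows "mmul X (dual_idem R x c) M = (\<lambda>p q. if p \<in> X \<and> (x, p) \<in> R c then M p q else (0::'a::field))"
proof (intro ext)
  fix p q
  have "mmul X (dual_idem R x c) M p q = (\<Sum>v\<in>X. if v = p then (if (x, p) \<in> R c then M p q else 0) else 0)"
    unfolding mmul_def dual_idem_def by (intro sum.cong) auto
  with assms show "mmul X (dual_idem R x c) M p q = (if p \<in> X \<and> (x, p) \<in> R c then M p q else 0)"
    by simp
qed

lemma mmul_dual_idem_right:
  assumes "finite X"
  shows "mmul X M (dual_idem R x c) = (\<lambda>p q. if q \<in> X \<and> (x, q) \<in> R c then M p q else (0::'a::field))"
proof (intro ext)
  fix p q
  have "mmul X M (dual_idem R x c) p q = (\<Sum>v\<in>X. if v = q then (if (x, q) \<in> R c then M p q else 0) else 0)"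
    unfolding mmul_def dual_idem_def by (intro sum.cong) auto
  with assms show "mmul X M (dual_idem R x c) p q = (if q \<in> X \<and> (x, q) \<in> R c then M p q else 0)"
    by simp
qed

lemma dual_idem_adj_dual_idem:
  assumes "finite X" "R i \<subseteq> X \<times> X" "R l \<subseteq> X \<times> X"
  shows "mmul X (mmul X (dual_idem R x i) (adj R j)) (dual_idem R x l) =
    (\<lambda>p q. if p \<in> out_nbhd R x i \<and> q \<in> out_nbhd R x l \<and> (p, q) \<in> R j then 1 else (0::'a::field))"
  using assms by (auto simp: mmul_dual_idem_left mmul_dual_idem_right adj_def fun_eq_iff)

lemma mmul_graph_matrix:
  assumes "f ` A \<subseteq> B" "B \<subseteq> X" "finite X"
  shows "mmul X (graph_matrix A f) (graph_matrix B g) = (graph_matrix A (g \<circ> f) :: 'x \<Rightarrow> 'x \<Rightarrow> 'a::field)"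
proof (intro ext)
  fix p q
  have "mmul X (graph_matrix A f) (graph_matrix B g) p q =
      (\<Sum>w\<in>X. if w = f p then (if p \<in> A \<and> q = g (f p) then 1 else 0) else (0::'a))"
    unfolding mmul_def graph_matrix_def using assms(1) by (intro sum.cong) auto
  also have "\<dots> = graph_matrix A (g \<circ> f) p q"
    using assms by (auto simp: graph_matrix_def)
  finally show "mmul X (graph_matrix A f) (graph_matrix B g) p q = (graph_matrix A (g \<circ> f) p q :: 'a)" .
qed

lemma graph_matrix_two_points:
  assumes f: "bij_betw f {u1, u2} {v1, v2}" and u: "u1 \<noteq> u2"
  shows "graph_matrix {u1, u2} f = (\<lambda>p q. munit u1 v1 p q + munit u2 v2 p q :: 'a::field)
       \<or> graph_matrix {u1, u2} f = (\<lambda>p q. munit u1 v2 p q + munit u2 v1 p q :: 'a::field)"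
proof -
  have "f u1 \<in> {v1, v2}" "f u2 \<in> {v1, v2}" "f u1 \<noteq> f u2"
    using f u by (auto simp: bij_betw_def inj_on_def)
  then consider "f u1 = v1" "f u2 = v2" | "f u1 = v2" "f u2 = v1"
    by auto
  then show ?thesis
    by cases (use u in \<open>auto simp: graph_matrix_def munit_def fun_eq_iff\<close>)
qed

lemma bij_betw_if_fibres_equicard:
  assumes g: "g ` B \<subseteq> A" and fin: "finite A" "finite B" and card: "card A = card B"
    and fibres: "\<And>p. p \<in> A \<Longrightarrow> card {q\<in>B. g q = p} = c"
  shows "bij_betw g B A"
proof (cases "B = {}")
  case True
  with fin card show ?thesis by (simp add: bij_betw_def)
next
  case False
  then obtain q0 where q0: "q0 \<in> B" by blast
  have "card {q\<in>B. g q = g q0} \<noteq> 0"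
    using q0 fin(2) by auto
  then have "c \<noteq> 0"
    using fibres[of "g q0"] g q0 by auto
  have "A \<subseteq> g ` B"
  proof
    fix p assume "p \<in> A"
    with fibres \<open>c \<noteq> 0\<close> have "{q\<in>B. g q = p} \<noteq> {}"
      by (metis card.empty)
    then show "p \<in> g ` B" by blast
  qed
  with g have surj: "g ` B = A" by blast
  with fin card have "inj_on g B"
    by (intro eq_card_imp_inj_on) auto
  with surj show ?thesis
    unfolding bij_betw_def by blast
qed

lemma relation_matrix_eq_graph_matrix:
  assumes bij: "bij_betw g B A"
    and g_in: "\<And>q. q \<in> B \<Longrightarrow> (g q, q) \<in> M"
    and g_unique: "\<And>p q. q \<in> B \<Longrightarrow> p \<in> A \<Longrightarrow> (p, q) \<in> M \<Longrightarrow> p = g q"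
  shows "(\<lambda>p q. if p \<in> A \<and> q \<in> B \<and> (p, q) \<in> M then 1 else 0) = (graph_matrix A (inv_into B g) :: 'x \<Rightarrow> 'x \<Rightarrow> 'a::field)"
proof -
  have "p \<in> A \<and> q \<in> B \<and> (p, q) \<in> M \<longleftrightarrow> p \<in> A \<and> q = inv_into B g p" for p q
  proof
    assume "p \<in> A \<and> q \<in> B \<and> (p, q) \<in> M"
    then show "p \<in> A \<and> q = inv_into B g p"
      using g_unique bij_betw_inv_into_left[OF bij] by metis
  next
    assume p: "p \<in> A \<and> q = inv_into B g p"
    then have "q \<in> B" "g q = p"
      using bij_betw_apply[OF bij_betw_inv_into[OF bij]] bij_betw_inv_into_right[OF bij] by auto
    with p g_in show "p \<in> A \<and> q \<in> B \<and> (p, q) \<in> M"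
      by metis
  qed
  then show ?thesis
    unfolding graph_matrix_def by presburger
qed

lemma factor_eq_graph_matrix:
  assumes S: "scheme X d R" and x: "x \<in> X" and ijl: "i \<le> d" "j \<le> d" "l \<le> d"
    and one: "int_num X R i j l = 1" and val: "valency X d R i = valency X d R l"
  obtains f where "bij_betw f (out_nbhd R x i) (out_nbhd R x l)"
    and "mmul X (mmul X (dual_idem R x i) (adj R j)) (dual_idem R x l) = (graph_matrix (out_nbhd R x i) f :: 'x \<Rightarrow> 'x \<Rightarrow> 'a::field)"
proof -
  let ?A = "out_nbhd R x i" and ?B = "out_nbhd R x l"
  have fin: "finite X" using scheme_finite[OF S] .
  have sub: "R i \<subseteq> X \<times> X" "R l \<subseteq> X \<times> X"
    using scheme_rel_subset[OF S] ijl by auto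
  have unique_row: "\<exists>!p. p \<in> ?A \<and> (p, q) \<in> R j" if "q \<in> ?B" for q
    using int_num_eq_1_ex1[OF S ijl one] that by simp
  define g where "g q = (THE p. p \<in> ?A \<and> (p, q) \<in> R j)" for q
  have g_in: "g q \<in> ?A" "(g q, q) \<in> R j" if "q \<in> ?B" for q
    using theI'[OF unique_row[OF that]] unfolding g_def by blast+
  have g_unique: "p = g q" if "q \<in> ?B" "p \<in> ?A" "(p, q) \<in> R j" for p q
    using the1_equality[OF unique_row[OF that(1)]] that unfolding g_def by simp
  obtain j' where j': "j' \<le> d" "R j' = (R j)\<inverse>"
    using scheme_converse_ex[OF S ijl(2)] by blast
  have "card {q\<in>?B. g q = p} = int_num X R l j' i" if p: "p \<in> ?A" for p
  proof -
    have "{q\<in>?B. g q = p} = {q. (x, q) \<in> R l \<and> (p, q) \<in> R j}"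
      using g_in g_unique p by blast
    then show ?thesis
      using int_num_converse_eq_card[OF S ijl j'] p by simp
  qed
  moreover have "card ?A = card ?B"
    using valency_eq_card[OF S _ x] ijl val by simp
  moreover have "g ` ?B \<subseteq> ?A"
    using g_in by blast
  moreover have "finite ?A" "finite ?B"
    using sub fin by (auto intro: finite_subset)
  ultimately have bij: "bij_betw g ?B ?A"
    by (intro bij_betw_if_fibres_equicard)
  show ?thesis
  proof
    show "bij_betw (inv_into ?B g) ?A ?B"
      using bij by (rule bij_betw_inv_into)
    show "mmul X (mmul X (dual_idem R x i) (adj R j)) (dual_idem R x l) = graph_matrix ?A (inv_into ?B g)"
      unfolding dual_idem_adj_dual_idem[OF fin sub]
      using bij g_in(2) g_unique by (rule relation_matrix_eq_graph_matrix)
  qed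
qed

lemma chain_prod_eq_graph_matrix:
  assumes S: "scheme X d R" and x: "x \<in> X"
    and "\<forall>b\<le>a. i b \<le> d \<and> j b \<le> d \<and> l b \<le> d"
    and "\<forall>b\<le>a. int_num X R (i b) (j b) (l b) = 1"
    and "\<forall>b\<le>a. valency X d R (i b) = valency X d R (l b)"
    and "\<forall>c<a. l c = i (Suc c)"
  shows "\<exists>f. bij_betw f (out_nbhd R x (i 0)) (out_nbhd R x (l a))
    \<and> (chain_prod X R x i j l a :: 'x \<Rightarrow> 'x \<Rightarrow> 'a::field) = graph_matrix (out_nbhd R x (i 0)) f"
  using assms(3-)
proof (induction a)
  case 0
  then show ?case
    using factor_eq_graph_matrix[OF S x, of "i 0" "j 0" "l 0"] by auto
next
  case (Suc a)
  from Suc.prems have "\<forall>b\<le>a. i b \<le> d \<and> j b \<le> d \<and> l b \<le> d"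
    "\<forall>b\<le>a. int_num X R (i b) (j b) (l b) = 1"
    "\<forall>b\<le>a. valency X d R (i b) = valency X d R (l b)" "\<forall>c<a. l c = i (Suc c)"
    by (blast intro: le_SucI less_SucI)+
  then obtain f where f: "bij_betw f (out_nbhd R x (i 0)) (out_nbhd R x (l a))"
    and prod: "(chain_prod X R x i j l a :: 'x \<Rightarrow> 'x \<Rightarrow> 'a) = graph_matrix (out_nbhd R x (i 0)) f"
    using Suc.IH by blast
  have link: "l a = i (Suc a)"
    using Suc.prems by simp
  obtain g where g: "bij_betw g (out_nbhd R x (l a)) (out_nbhd R x (l (Suc a)))"
    and factor: "mmul X (mmul X (dual_idem R x (i (Suc a))) (adj R (j (Suc a)))) (dual_idem R x (l (Suc a)))
      = (graph_matrix (out_nbhd R x (l a)) g :: 'x \<Rightarrow> 'x \<Rightarrow> 'a)"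
    using factor_eq_graph_matrix[OF S x, of "i (Suc a)" "j (Suc a)" "l (Suc a)"] Suc.prems link
    by (metis le_refl)
  have "out_nbhd R x (l a) \<subseteq> X"
    using scheme_rel_subset[OF S, of "l a"] Suc.prems by auto
  then have "(chain_prod X R x i j l (Suc a) :: 'x \<Rightarrow> 'x \<Rightarrow> 'a) = graph_matrix (out_nbhd R x (i 0)) (g \<circ> f)"
    using mmul_graph_matrix[OF bij_betw_imp_surj_on[OF f, THEN equalityD1] _ scheme_finite[OF S]]
      prod factor by simp
  with f g show ?case
    by (meson bij_betw_trans)
qed

theorem corollary3p9:
  fixes X :: "'x set" and d :: nat and R :: "nat \<Rightarrow> ('x \<times> 'x) set"
    and x :: 'x and a :: nat and i j l :: "nat \<Rightarrow> nat" and u1 u2 v1 v2 :: 'x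
  assumes "scheme X d R"
    and "x \<in> X"
    and "\<forall>b\<le>a. i b \<le> d \<and> j b \<le> d \<and> l b \<le> d"
    and "\<forall>b\<le>a. int_num X R (i b) (j b) (l b) = 1"
    and "\<forall>b\<le>a. valency X d R (i b) = 2 \<and> valency X d R (l b) = 2"
    and "\<forall>c<a. l c = i (Suc c)"
    and "{y. (x,y) \<in> R (i 0)} = {u1, u2}"
    and "{y. (x,y) \<in> R (l a)} = {v1, v2}"
  shows "(chain_prod X R x i j l a :: 'x \<Rightarrow> 'x \<Rightarrow> 'a::field) = (\<lambda>p q. munit u1 v1 p q + munit u2 v2 p q)
       \<or> (chain_prod X R x i j l a :: 'x \<Rightarrow> 'x \<Rightarrow> 'a::field) = (\<lambda>p q. munit u1 v2 p q + munit u2 v1 p q)"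
proof -
  have "\<forall>b\<le>a. valency X d R (i b) = valency X d R (l b)"
    using assms(5) by simp
  then obtain f where f: "bij_betw f {u1, u2} {v1, v2}"
    and prod: "(chain_prod X R x i j l a :: 'x \<Rightarrow> 'x \<Rightarrow> 'a) = graph_matrix {u1, u2} f"
    using chain_prod_eq_graph_matrix[OF assms(1-4) _ assms(6)] assms(7,8) by auto
  have "card {u1, u2} = 2"
    using valency_eq_card[OF assms(1) _ assms(2), of "i 0"] assms(3,5,7) by simp
  then have "u1 \<noteq> u2" by auto
  with f prod show ?thesis
    using graph_matrix_two_points by simp
qed

end
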